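(* Let $\Sigma\subset\mathbb{R}^d$ be a connected open set, $M\subset\mathbb{R}^D$ open, $V$ a smooth volume metric on $M$, and $X:\Sigma\to M$ smooth with $\gamma_v>0$ on $\Sigma$. Then $X$ satisfies the Euler–Lagrange equations of the Schild action $S_S=\int_\Sigma d^d\xi\,\gamma_v$ if and only if $\gamma_v$ is constant on $\Sigma$ and $X$ satisfies the Euler–Lagrange equations of the Nambu–Goto action $S_{NG}=\int_\Sigma d^d\xi\,\sqrt{\gamma_v}$.
   Context: A volume metric (of degree $d$) on $M$ is a smooth field of components $V_{[\mu_1\cdots\mu_d][\nu_1\cdots\nu_d]}(X)$ that is totally antisymmetric within each of the two $d$-tuples of indices and symmetric under exchange of the two $d$-tuples. Define $\sigma^{\mu_1\cdots\mu_d}=\epsilon^{a_1\cdots a_d}\partial_{a_1}X^{\mu_1}\cdots\partial_{a_d}X^{\mu_d}$ ($\epsilon$ the Levi-Civita symbol) and $\gamma_v=V_{[\mu_1\cdots\mu_d][\nu_1\cdots\nu_d]}(X)\,\sigma^{\mu_1\cdots\mu_d}\sigma^{\nu_1\cdots\nu_d}$. For a Riemannian (pseudo-Riemannian, with absolute determinant) metric $g$, taking $V=\frac1{d!}g_{\mu_1\nu_1}\cdots g_{\mu_d\nu_d}$ gives $\gamma_v=\det(g_{\mu\nu}(X)\partial_aX^\mu\partial_bX^\nu)$; for $d=2$ and an areal metric $G$ (components with $G_{\mu\nu\rho\lambda}=-G_{\nu\mu\rho\lambda}=-G_{\mu\nu\lambda\rho}=G_{\rho\lambda\mu\nu}$),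 $V=\frac14 G$. The Euler–Lagrange equations of $\int d^d\xi\,L$ are $\partial L/\partial X^\alpha-\partial_a\big(\partial L/\partial(\partial_aX^\alpha)\big)=0$. *)

theory Defs
  imports "HOL-Analysis.Analysis"
begin

definition pd :: "'n::finite \<Rightarrow> (real^'n \<Rightarrow> real) \<Rightarrow> real^'n \<Rightarrow> real" where
  "pd a f \<xi> = deriv (\<lambda>t. f (\<xi> + t *\<^sub>R axis a 1)) 0"

fun ipd :: "'n::finite list \<Rightarrow> (real^'n \<Rightarrow> real) \<Rightarrow> real^'n \<Rightarrow> real" where
  "ipd [] f = f"
| "ipd (a # as) f = pd a (ipd as f)"

definition smooth_fun_on :: "(real^'n::finite) set \<Rightarrow> (real^'n \<Rightarrow> real) \<Rightarrow> bool" where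
  "smooth_fun_on S f \<longleftrightarrow>
     (\<forall>as. continuous_on S (ipd as f) \<and>
        (\<forall>a. \<forall>\<xi>\<in>S. (\<lambda>t. ipd as f (\<xi> + t *\<^sub>R axis a 1)) differentiable (at 0)))"

definition smooth_map_on :: "(real^'n::finite) set \<Rightarrow> (real^'n \<Rightarrow> real^'m::finite) \<Rightarrow> bool" where
  "smooth_map_on S X \<longleftrightarrow> (\<forall>\<mu>. smooth_fun_on S (\<lambda>\<xi>. X \<xi> $ \<mu>))"

text \<open>Volume metric of degree d = CARD('d) on M: components V x \<mu> \<nu> indexed by
  d-tuples \<mu>, \<nu> :: 'd \<Rightarrow> 'D of target indices.\<close>
definition volume_metric ::
  "(real^'D::finite) set \<Rightarrow> (real^'D \<Rightarrow> ('d::finite \<Rightarrow> 'D) \<Rightarrow> ('d \<Rightarrow> 'D) \<Rightarrow> real) \<Rightarrow> bool" where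
  "volume_metric M V \<longleftrightarrow>
     (\<forall>\<mu> \<nu>. smooth_fun_on M (\<lambda>x. V x \<mu> \<nu>)) \<and>
     (\<forall>x\<in>M. \<forall>\<mu> \<nu>. V x \<mu> \<nu> = V x \<nu> \<mu> \<and>
        (\<forall>p. p permutes (UNIV :: 'd set) \<longrightarrow> V x (\<mu> \<circ> p) \<nu> = of_int (sign p) * V x \<mu> \<nu>))"

text \<open>sigma^{\<mu>_1...\<mu>_d} = \<epsilon>^{a_1...a_d} P_{a_1}^{\<mu>_1} ... P_{a_d}^{\<mu>_d},
  where P a \<mu> stands for \<partial>_a X^\<mu>. The Levi-Civita symbol is the sign of a permutation
  (and zero on non-bijective index tuples, which are therefore omitted).\<close>
definition sigma :: "('d::finite \<Rightarrow> 'D::finite \<Rightarrow> real) \<Rightarrow> ('d \<Rightarrow> 'D) \<Rightarrow> real" where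
  "sigma P \<mu> = (\<Sum>p\<in>{p. p permutes (UNIV :: 'd set)}. of_int (sign p) * (\<Prod>i\<in>UNIV. P (p i) (\<mu> i)))"

text \<open>gamma_v as a function of the field value x and its first derivatives P.\<close>
definition gammaL ::
  "(real^'D::finite \<Rightarrow> ('d::finite \<Rightarrow> 'D) \<Rightarrow> ('d \<Rightarrow> 'D) \<Rightarrow> real) \<Rightarrow> real^'D \<Rightarrow> ('d \<Rightarrow> 'D \<Rightarrow> real) \<Rightarrow> real" where
  "gammaL V x P = (\<Sum>\<mu>\<in>UNIV. \<Sum>\<nu>\<in>UNIV. V x \<mu> \<nu> * sigma P \<mu> * sigma P \<nu>)"

definition DX :: "(real^'d::finite \<Rightarrow> real^'D::finite) \<Rightarrow> real^'d \<Rightarrow> 'd \<Rightarrow> 'D \<Rightarrow> real" where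
  "DX X \<xi> a \<mu> = pd a (\<lambda>\<eta>. X \<eta> $ \<mu>) \<xi>"

definition gamma_v ::
  "(real^'D::finite \<Rightarrow> ('d::finite \<Rightarrow> 'D) \<Rightarrow> ('d \<Rightarrow> 'D) \<Rightarrow> real) \<Rightarrow> (real^'d \<Rightarrow> real^'D) \<Rightarrow> real^'d \<Rightarrow> real" where
  "gamma_v V X \<xi> = gammaL V (X \<xi>) (DX X \<xi>)"

definition dL_dX :: "(real^'D::finite \<Rightarrow> ('d::finite \<Rightarrow> 'D \<Rightarrow> real) \<Rightarrow> real) \<Rightarrow> 'D \<Rightarrow> real^'D \<Rightarrow> ('d \<Rightarrow> 'D \<Rightarrow> real) \<Rightarrow> real" where
  "dL_dX L \<alpha> x P = deriv (\<lambda>t. L (x + t *\<^sub>R axis \<alpha> 1) P) 0"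

definition dL_dP :: "(real^'D::finite \<Rightarrow> ('d::finite \<Rightarrow> 'D \<Rightarrow> real) \<Rightarrow> real) \<Rightarrow> 'd \<Rightarrow> 'D \<Rightarrow> real^'D \<Rightarrow> ('d \<Rightarrow> 'D \<Rightarrow> real) \<Rightarrow> real" where
  "dL_dP L a \<alpha> x P = deriv (\<lambda>t. L x (P(a := (P a)(\<alpha> := P a \<alpha> + t)))) 0"

definition euler_lagrange ::
  "(real^'d::finite) set \<Rightarrow> (real^'D::finite \<Rightarrow> ('d \<Rightarrow> 'D \<Rightarrow> real) \<Rightarrow> real) \<Rightarrow> (real^'d \<Rightarrow> real^'D) \<Rightarrow> bool" where
  "euler_lagrange S L X \<longleftrightarrow>
     (\<forall>\<alpha>. \<forall>\<xi>\<in>S. dL_dX L \<alpha> (X \<xi>) (DX X \<xi>)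
                 - (\<Sum>a\<in>UNIV. pd a (\<lambda>\<eta>. dL_dP L a \<alpha> (X \<eta>) (DX X \<eta>)) \<xi>) = 0)"

definition schildL where "schildL V = (\<lambda>x P. gammaL V x P)"
definition nambuGotoL where "nambuGotoL V = (\<lambda>x P. sqrt (gammaL V x P))"

end

(*
  Both Lagrangians are functions of gamma_v alone, so the partial derivatives of the
  Nambu-Goto Lagrangian are those of the Schild Lagrangian divided by 2 sqrt gamma_v.  When
  gamma_v is a positive constant c, the Nambu-Goto Euler-Lagrange expression is therefore the
  Schild one divided by 2 sqrt c, and the two systems of equations are equivalent.

  It remains to see that the Schild equations force gamma_v to be constant.  Since sigma is
  alternating in the rows of dX, contracting d gamma / d(d_a X^alpha) with d_b X^alpha gives
  2 delta_ab gamma_v.  Contracting the Schild equations with d_b X^alpha and using the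
  symmetry of the second derivatives of X therefore yields d_b gamma_v = 2 d_b gamma_v, so
  all partial derivatives of gamma_v vanish and gamma_v is constant on the connected set S.
*)
theory Submission
  imports Defs
begin

section \<open>Partial derivatives along coordinate axes\<close>

lemma DERIV_line_shift:
  fixes v :: "'a::real_vector"
  assumes "((\<lambda>t. f ((\<xi> + s *\<^sub>R v) + t *\<^sub>R v)) has_real_derivative D) (at 0)"
  shows "((\<lambda>t. f (\<xi> + t *\<^sub>R v)) has_real_derivative D) (at s)"
proof -
  have "(\<lambda>t. f (\<xi> + (t + s) *\<^sub>R v)) = (\<lambda>t. f ((\<xi> + s *\<^sub>R v) + t *\<^sub>R v))"
    by (rule ext) (simp add: scaleR_add_left ac_simps)
  with assms show ?thesis
    using DERIV_shift[of "\<lambda>t. f (\<xi> + t *\<^sub>R v)" D 0 s] by simp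
qed

lemma has_real_derivative_pd:
  assumes "(\<lambda>t. f (\<xi> + t *\<^sub>R axis a 1)) differentiable (at 0)"
  shows "((\<lambda>t. f (\<xi> + t *\<^sub>R axis a 1)) has_real_derivative pd a f \<xi>) (at 0)"
  using assms unfolding pd_def by (simp add: DERIV_deriv_iff_real_differentiable)

lemma pd_eqI:
  "((\<lambda>t. f (\<xi> + t *\<^sub>R axis a 1)) has_real_derivative D) (at 0) \<Longrightarrow> pd a f \<xi> = D"
  unfolding pd_def by (rule DERIV_imp_deriv)

lemma pd_cong_ball:
  assumes "r > 0" and "\<And>y. y \<in> ball \<xi> r \<Longrightarrow> f y = g y"
  shows "pd a f \<xi> = pd a g \<xi>"
  unfolding pd_def
proof (rule deriv_cong_ev[OF _ refl])
  have "f (\<xi> + t *\<^sub>R axis a 1) = g (\<xi> + t *\<^sub>R axis a 1)" if "dist t 0 < r" for t :: real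
    using that by (intro assms(2)) (simp add: dist_norm)
  then show "\<forall>\<^sub>F t in nhds 0. f (\<xi> + t *\<^sub>R axis a 1) = g (\<xi> + t *\<^sub>R axis a 1)"
    unfolding eventually_nhds_metric using assms(1) by blast
qed

lemma smooth_fun_on_differentiable_ipd:
  "smooth_fun_on S f \<Longrightarrow> y \<in> S \<Longrightarrow> (\<lambda>t. ipd as f (y + t *\<^sub>R axis a 1)) differentiable (at 0)"
  unfolding smooth_fun_on_def by blast

lemma smooth_fun_on_continuous_ipd: "smooth_fun_on S f \<Longrightarrow> continuous_on S (ipd as f)"
  unfolding smooth_fun_on_def by blast

lemma smooth_fun_on_DERIV_ipd:
  "smooth_fun_on S f \<Longrightarrow> y \<in> S \<Longrightarrow>
    ((\<lambda>t. ipd as f (y + t *\<^sub>R axis a 1)) has_real_derivative pd a (ipd as f) y) (at 0)"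
  by (rule has_real_derivative_pd) (rule smooth_fun_on_differentiable_ipd)

lemma MVT_symmetric:
  fixes \<phi> :: "real \<Rightarrow> real"
  assumes "\<And>s. \<bar>s\<bar> \<le> \<bar>u\<bar> \<Longrightarrow> (\<phi> has_real_derivative \<phi>' s) (at s)"
  shows "\<exists>z. \<bar>z\<bar> \<le> \<bar>u\<bar> \<and> \<phi> u - \<phi> 0 = u * \<phi>' z"
proof (cases u "0::real" rule: linorder_cases)
  case less
  then obtain z where "u < z" "z < 0" "\<phi> 0 - \<phi> u = (0 - u) * \<phi>' z"
    using MVT2[of u 0 \<phi> \<phi>'] assms by fastforce
  then show ?thesis by (intro exI[of _ z]) (auto simp: algebra_simps)
next
  case greater
  then obtain z where "0 < z" "z < u" "\<phi> u - \<phi> 0 = (u - 0) * \<phi>' z"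
    using MVT2[of 0 u \<phi> \<phi>'] assms by fastforce
  then show ?thesis by (intro exI[of _ z]) auto
qed simp

lemma increment_along_axis_bound:
  fixes f :: "real^'n::finite \<Rightarrow> real"
  assumes "\<And>s. \<bar>s\<bar> \<le> \<bar>u\<bar> \<Longrightarrow> (\<lambda>t. f ((y + s *\<^sub>R axis j 1) + t *\<^sub>R axis j 1)) differentiable (at 0)"
    and "\<And>s. \<bar>s\<bar> \<le> \<bar>u\<bar> \<Longrightarrow> \<bar>pd j f (y + s *\<^sub>R axis j 1) - c\<bar> \<le> e"
  shows "\<bar>f (y + u *\<^sub>R axis j 1) - f y - u * c\<bar> \<le> e * \<bar>u\<bar>"
proof -
  have "((\<lambda>t. f (y + t *\<^sub>R axis j 1)) has_real_derivative pd j f (y + s *\<^sub>R axis j 1)) (at s)"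
    if "\<bar>s\<bar> \<le> \<bar>u\<bar>" for s
    by (rule DERIV_line_shift, rule has_real_derivative_pd, rule assms(1)[OF that])
  from MVT_symmetric[OF this] obtain z where z: "\<bar>z\<bar> \<le> \<bar>u\<bar>"
    and "f (y + u *\<^sub>R axis j 1) - f y = u * pd j f (y + z *\<^sub>R axis j 1)"
    by auto
  then have "\<bar>f (y + u *\<^sub>R axis j 1) - f y - u * c\<bar> = \<bar>u\<bar> * \<bar>pd j f (y + z *\<^sub>R axis j 1) - c\<bar>"
    by (simp add: abs_mult[symmetric] right_diff_distrib)
  also have "\<dots> \<le> \<bar>u\<bar> * e"
    using assms(2)[OF z] by (simp add: mult_left_mono)
  finally show ?thesis by (simp add: mult.commute)
qed

definition vec_restrict :: "'n::finite set \<Rightarrow> real^'n \<Rightarrow> real^'n" where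
  "vec_restrict I h = (\<chi> i. if i \<in> I then h$i else 0)"

lemma vec_restrict_insert:
  "j \<notin> I \<Longrightarrow> vec_restrict (insert j I) h = vec_restrict I h + h$j *\<^sub>R axis j 1"
  by (auto simp: vec_restrict_def vec_eq_iff axis_def)

lemma norm_vec_restrict_add_axis_le:
  "j \<notin> I \<Longrightarrow> \<bar>s\<bar> \<le> \<bar>h$j\<bar> \<Longrightarrow> norm (vec_restrict I h + s *\<^sub>R axis j 1) \<le> norm h"
  by (rule norm_le_componentwise_cart) (auto simp: vec_restrict_def axis_def)

text \<open>Change one coordinate of the increment at a time; each step is controlled by
  the mean value theorem along that coordinate axis.\<close>
lemma increment_bound_continuous_pd:
  fixes f :: "real^'n::finite \<Rightarrow> real"
  assumes dif: "\<And>a y. y \<in> ball x r \<Longrightarrow> (\<lambda>t. f (y + t *\<^sub>R axis a 1)) differentiable (at 0)"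
    and close: "\<And>a y. y \<in> ball x r \<Longrightarrow> \<bar>pd a f y - pd a f x\<bar> \<le> e"
    and h: "norm h < r"
  shows "\<bar>f (x + h) - f x - (\<Sum>a\<in>UNIV. h$a * pd a f x)\<bar> \<le> real CARD('n) * e * norm h"
proof -
  have e_nonneg: "0 \<le> e"
    using close[of x] h norm_ge_zero[of h] by force
  let ?h = "\<lambda>I. vec_restrict I h"
  have partial: "\<bar>f (x + ?h I) - f x - (\<Sum>a\<in>I. h$a * pd a f x)\<bar> \<le> real (card I) * e * norm h"
    if "finite I" for I
    using that
  proof (induction I rule: finite_induct)
    case empty
    have "vec_restrict {} h = 0"
      by (simp add: vec_restrict_def vec_eq_iff)
    then show ?case by simp
  next
    case (insert j I)
    have "x + ?h I + s *\<^sub>R axis j 1 \<in> ball x r" if "\<bar>s\<bar> \<le> \<bar>h$j\<bar>" for s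
      using norm_vec_restrict_add_axis_le[OF insert.hyps(2) that] h
        norm_minus_cancel[of "?h I + s *\<^sub>R axis j 1"] by (simp add: dist_norm add.assoc)
    then have "\<bar>f (x + ?h I + h$j *\<^sub>R axis j 1) - f (x + ?h I) - h$j * pd j f x\<bar> \<le> e * \<bar>h$j\<bar>"
      by (intro increment_along_axis_bound) (use dif close in auto)
    also have "\<dots> \<le> e * norm h"
      using e_nonneg by (intro mult_left_mono component_le_norm_cart)
    finally have "\<bar>f (x + ?h (insert j I)) - f (x + ?h I) - h$j * pd j f x\<bar> \<le> e * norm h"
      by (simp add: vec_restrict_insert[OF insert.hyps(2)] add.assoc)
    moreover have "f (x + ?h (insert j I)) - f x - (\<Sum>a\<in>insert j I. h$a * pd a f x)
        = (f (x + ?h (insert j I)) - f (x + ?h I) - h$j * pd j f x)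
          + (f (x + ?h I) - f x - (\<Sum>a\<in>I. h$a * pd a f x))"
      using insert.hyps by simp
    ultimately have "\<bar>f (x + ?h (insert j I)) - f x - (\<Sum>a\<in>insert j I. h$a * pd a f x)\<bar>
        \<le> e * norm h + real (card I) * e * norm h"
      using insert.IH by linarith
    also have "\<dots> = real (card (insert j I)) * e * norm h"
      using insert.hyps by (simp add: algebra_simps)
    finally show ?case .
  qed
  have "?h UNIV = h"
    by (simp add: vec_restrict_def vec_eq_iff)
  with partial[of UNIV] show ?thesis
    by simp
qed

lemma eventually_nhds_close_if_continuous_on:
  fixes g :: "'a::metric_space \<Rightarrow> real"
  assumes "open S" "x \<in> S" "continuous_on S g" "e > 0"
  shows "\<forall>\<^sub>F y in nhds x. y \<in> S \<and> \<bar>g y - g x\<bar> < e"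
proof -
  have "(g \<longlongrightarrow> g x) (nhds x)"
    using assms(1-3) by (simp add: continuous_on_eq_continuous_at isCont_def tendsto_at_iff_tendsto_nhds)
  from tendstoD[OF this \<open>e > 0\<close>] show ?thesis
    using eventually_nhds_in_open[OF assms(1,2)] by eventually_elim (simp add: dist_real_def)
qed

lemma has_derivative_if_continuous_pd:
  fixes f :: "real^'n::finite \<Rightarrow> real"
  assumes "open S" "x \<in> S"
    and dif: "\<And>a y. y \<in> S \<Longrightarrow> (\<lambda>t. f (y + t *\<^sub>R axis a 1)) differentiable (at 0)"
    and cont: "\<And>a. continuous_on S (pd a f)"
  shows "(f has_derivative (\<lambda>h. \<Sum>a\<in>UNIV. h$a * pd a f x)) (at x)"
  unfolding has_derivative_at_alt
proof (intro conjI allI impI)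
  show "bounded_linear (\<lambda>h. \<Sum>a\<in>UNIV. h$a * pd a f x)"
    by (auto intro!: bounded_linear_intros)
  fix e :: real
  assume "e > 0"
  define e' where "e' = e / real CARD('n)"
  have "\<forall>\<^sub>F y in nhds x. \<forall>a. y \<in> S \<and> \<bar>pd a f y - pd a f x\<bar> < e'"
    using \<open>e > 0\<close> by (intro eventually_all_finite eventually_nhds_close_if_continuous_on)
      (auto simp: assms e'_def)
  then obtain r where "r > 0" and r: "\<And>y a. dist y x < r \<Longrightarrow> y \<in> S \<and> \<bar>pd a f y - pd a f x\<bar> < e'"
    unfolding eventually_nhds_metric by blast
  have "\<bar>f y - f x - (\<Sum>a\<in>UNIV. (y - x)$a * pd a f x)\<bar> \<le> e * norm (y - x)"
    if "norm (y - x) < r" for y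
    using increment_bound_continuous_pd[of x r f e' "y - x"] dif r that
    by (force simp: dist_commute e'_def less_imp_le)
  with \<open>r > 0\<close> show "\<exists>d>0. \<forall>y. norm (y - x) < d \<longrightarrow>
      norm (f y - f x - (\<Sum>a\<in>UNIV. (y - x)$a * pd a f x)) \<le> e * norm (y - x)"
    by auto
qed

lemma constant_on_if_pd_zero:
  fixes f :: "real^'n::finite \<Rightarrow> real"
  assumes "open S" "connected S"
    and dif: "\<And>a y. y \<in> S \<Longrightarrow> (\<lambda>t. f (y + t *\<^sub>R axis a 1)) differentiable (at 0)"
    and zero: "\<And>a y. y \<in> S \<Longrightarrow> pd a f y = 0"
  shows "f constant_on S"
proof -
  have "continuous_on S (pd a f)" for a
    using continuous_on_const continuous_on_cong zero by metis
  then have deriv0: "(f has_derivative (\<lambda>h. 0)) (at x)" if "x \<in> S" for x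
    using has_derivative_if_continuous_pd[OF \<open>open S\<close> that dif] zero[OF that] by simp
  then have "continuous_on S f"
    by (meson continuous_at_imp_continuous_on has_derivative_continuous)
  then show ?thesis
    by (rule has_derivative_zero_connected_constant_on[OF \<open>connected S\<close> \<open>open S\<close> finite.emptyI])
      (simp add: deriv0 has_derivative_at_withinI)
qed

lemma smooth_fun_on_has_derivative:
  assumes "smooth_fun_on S f" "open S" "x \<in> S"
  shows "(f has_derivative (\<lambda>h. \<Sum>a\<in>UNIV. h$a * pd a f x)) (at x)"
proof (rule has_derivative_if_continuous_pd[OF assms(2,3)])
  show "(\<lambda>t. f (y + t *\<^sub>R axis a 1)) differentiable (at 0)" if "y \<in> S" for a y
    using smooth_fun_on_differentiable_ipd[OF assms(1) that, of "[]"] by simp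
  show "continuous_on S (pd a f)" for a
    using smooth_fun_on_continuous_ipd[OF assms(1), of "[a]"] by simp
qed

lemma DERIV_comp_curve:
  fixes f :: "real^'n::finite \<Rightarrow> real" and c :: "real \<Rightarrow> real^'n"
  assumes f: "(f has_derivative (\<lambda>h. \<Sum>k\<in>UNIV. h$k * D k)) (at (c s))"
    and c: "\<And>k. ((\<lambda>t. c t $ k) has_real_derivative c' k) (at s)"
  shows "((\<lambda>t. f (c t)) has_real_derivative (\<Sum>k\<in>UNIV. D k * c' k)) (at s)"
proof -
  have "((\<lambda>t. c t \<bullet> i) has_derivative (\<lambda>t. (t *\<^sub>R (\<chi> k. c' k)) \<bullet> i)) (at s)" if "i \<in> Basis" for i
  proof -
    from that obtain k where i: "i = axis k 1" by (auto simp: Basis_vec_def)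
    have "(\<lambda>t. t * c' k) = (*) (c' k)"
      by (simp add: fun_eq_iff mult.commute)
    with c[of k] show ?thesis
      unfolding i inner_axis has_field_derivative_def by simp
  qed
  then have "(c has_derivative (\<lambda>t. t *\<^sub>R (\<chi> k. c' k))) (at s)"
    by (subst has_derivative_componentwise_within) blast
  from diff_chain_at[OF this f]
  have "(f \<circ> c has_derivative (\<lambda>h. \<Sum>k\<in>UNIV. h$k * D k) \<circ> (\<lambda>t. t *\<^sub>R (\<chi> k. c' k))) (at s)" .
  moreover have "(\<lambda>h. \<Sum>k\<in>UNIV. h$k * D k) \<circ> (\<lambda>t. t *\<^sub>R (\<chi> k. c' k)) = (*) (\<Sum>k\<in>UNIV. D k * c' k)"
    by (simp add: fun_eq_iff sum_distrib_left mult_ac)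
  ultimately show ?thesis
    unfolding has_field_derivative_def o_def by simp
qed

lemma pd_sum_mult:
  assumes "\<And>\<alpha>. (\<lambda>t. f \<alpha> (\<xi> + t *\<^sub>R axis a 1)) differentiable (at 0)"
    and "\<And>\<alpha>. (\<lambda>t. g \<alpha> (\<xi> + t *\<^sub>R axis a 1)) differentiable (at 0)"
  shows "pd a (\<lambda>\<eta>. \<Sum>\<alpha>\<in>A. f \<alpha> \<eta> * g \<alpha> \<eta>) \<xi> = (\<Sum>\<alpha>\<in>A. pd a (f \<alpha>) \<xi> * g \<alpha> \<xi> + f \<alpha> \<xi> * pd a (g \<alpha>) \<xi>)"
  by (intro pd_eqI DERIV_sum DERIV_cong[OF DERIV_mult'[OF has_real_derivative_pd has_real_derivative_pd]] assms)
    simp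

lemma sum_pd_delta:
  assumes "(\<lambda>t. g (\<xi> + t *\<^sub>R axis b 1)) differentiable (at 0)"
  shows "(\<Sum>a\<in>UNIV. pd a (\<lambda>\<eta>. if a = b then c * g \<eta> else 0) \<xi>) = c * pd b g \<xi>"
proof -
  have "pd b (\<lambda>\<eta>. c * g \<eta>) \<xi> = c * pd b g \<xi>"
    by (intro pd_eqI DERIV_cmult has_real_derivative_pd assms)
  moreover have "pd a (\<lambda>_. 0) \<xi> = 0" for a
    by (intro pd_eqI DERIV_const)
  ultimately have "pd a (\<lambda>\<eta>. if a = b then c * g \<eta> else 0) \<xi> = (if a = b then c * pd b g \<xi> else 0)" for a
    by (cases "a = b") simp_all
  then show ?thesis
    by simp
qed

section \<open>Symmetry of second derivatives\<close>

lemma add_axes_in_cball: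
  fixes s t h :: real and \<xi> :: "real^'n::finite"
  assumes "\<bar>s\<bar> \<le> h" "\<bar>t\<bar> \<le> h"
  shows "\<xi> + s *\<^sub>R axis a 1 + t *\<^sub>R axis b 1 \<in> cball \<xi> (2 * h)"
proof -
  have "norm (s *\<^sub>R axis a 1 + t *\<^sub>R axis b 1 :: real^'n) \<le> \<bar>s\<bar> + \<bar>t\<bar>"
    using norm_triangle_ineq[of "s *\<^sub>R axis a 1 :: real^'n" "t *\<^sub>R axis b 1"] by simp
  with assms show ?thesis
    using norm_minus_cancel[of "s *\<^sub>R axis a 1 + t *\<^sub>R axis b 1 :: real^'n"]
    by (simp add: dist_norm add.assoc)
qed

lemma second_difference_mixed_pd:
  fixes f :: "real^'n::finite \<Rightarrow> real"
  assumes S: "cball \<xi> (2 * h) \<subseteq> S" and "0 < h"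
    and dA: "\<And>y. y \<in> S \<Longrightarrow> (\<lambda>t. f (y + t *\<^sub>R axis a 1)) differentiable (at 0)"
    and dAB: "\<And>y. y \<in> S \<Longrightarrow> (\<lambda>t. pd a f (y + t *\<^sub>R axis b 1)) differentiable (at 0)"
  shows "\<exists>y\<in>cball \<xi> (2 * h).
     f (\<xi> + h *\<^sub>R axis a 1 + h *\<^sub>R axis b 1) - f (\<xi> + h *\<^sub>R axis a 1) - f (\<xi> + h *\<^sub>R axis b 1) + f \<xi>
       = h * h * pd b (pd a f) y"
proof -
  define \<phi> where "\<phi> s = f ((\<xi> + h *\<^sub>R axis b 1) + s *\<^sub>R axis a 1) - f (\<xi> + s *\<^sub>R axis a 1)" for s
  have der_\<phi>: "(\<phi> has_real_derivative
      pd a f ((\<xi> + h *\<^sub>R axis b 1) + s *\<^sub>R axis a 1) - pd a f (\<xi> + s *\<^sub>R axis a 1)) (at s)"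
    if "\<bar>s\<bar> \<le> \<bar>h\<bar>" for s
    unfolding \<phi>_def
  proof (rule DERIV_diff; rule DERIV_line_shift, rule has_real_derivative_pd, rule dA)
    have "\<bar>s\<bar> \<le> h" "\<bar>0::real\<bar> \<le> h" "\<bar>h\<bar> \<le> h"
      using that \<open>0 < h\<close> by auto
    then have "\<xi> + s *\<^sub>R axis a 1 + h *\<^sub>R axis b 1 \<in> S" "\<xi> + s *\<^sub>R axis a 1 + 0 *\<^sub>R axis b 1 \<in> S"
      using add_axes_in_cball S by blast+
    then show "\<xi> + h *\<^sub>R axis b 1 + s *\<^sub>R axis a 1 \<in> S" "\<xi> + s *\<^sub>R axis a 1 \<in> S"
      by (simp_all add: ac_simps)
  qed
  obtain s where s: "\<bar>s\<bar> \<le> h"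
    and \<phi>: "\<phi> h - \<phi> 0 = h * (pd a f ((\<xi> + h *\<^sub>R axis b 1) + s *\<^sub>R axis a 1) - pd a f (\<xi> + s *\<^sub>R axis a 1))"
    using MVT_symmetric[of h \<phi>, OF der_\<phi>] \<open>0 < h\<close> by auto
  define \<psi> where "\<psi> t = pd a f ((\<xi> + s *\<^sub>R axis a 1) + t *\<^sub>R axis b 1)" for t
  have der_\<psi>: "(\<psi> has_real_derivative pd b (pd a f) ((\<xi> + s *\<^sub>R axis a 1) + t *\<^sub>R axis b 1)) (at t)"
    if "\<bar>t\<bar> \<le> \<bar>h\<bar>" for t
    unfolding \<psi>_def
    by (rule DERIV_line_shift, rule has_real_derivative_pd, rule dAB, rule subsetD[OF S],
      rule add_axes_in_cball[OF s]) (use that \<open>0 < h\<close> in simp)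
  obtain t where t: "\<bar>t\<bar> \<le> h"
    and \<psi>: "\<psi> h - \<psi> 0 = h * pd b (pd a f) ((\<xi> + s *\<^sub>R axis a 1) + t *\<^sub>R axis b 1)"
    using MVT_symmetric[of h \<psi>, OF der_\<psi>] \<open>0 < h\<close> by auto
  have "f (\<xi> + h *\<^sub>R axis a 1 + h *\<^sub>R axis b 1) - f (\<xi> + h *\<^sub>R axis a 1) - f (\<xi> + h *\<^sub>R axis b 1) + f \<xi>
      = \<phi> h - \<phi> 0" by (simp add: \<phi>_def ac_simps)
  also have "\<dots> = h * (\<psi> h - \<psi> 0)" using \<phi> by (simp add: \<psi>_def ac_simps)
  also have "\<dots> = h * h * pd b (pd a f) (\<xi> + s *\<^sub>R axis a 1 + t *\<^sub>R axis b 1)"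
    using \<psi> by simp
  finally show ?thesis using add_axes_in_cball[OF s t] by blast
qed

text \<open>Schwarz's theorem: the second difference quotient over a small square tends to both
  mixed partial derivatives.\<close>
lemma pd_commute:
  fixes f :: "real^'n::finite \<Rightarrow> real"
  assumes "open S" "\<xi> \<in> S"
    and dA: "\<And>y. y \<in> S \<Longrightarrow> (\<lambda>t. f (y + t *\<^sub>R axis a 1)) differentiable (at 0)"
    and dB: "\<And>y. y \<in> S \<Longrightarrow> (\<lambda>t. f (y + t *\<^sub>R axis b 1)) differentiable (at 0)"
    and dAB: "\<And>y. y \<in> S \<Longrightarrow> (\<lambda>t. pd a f (y + t *\<^sub>R axis b 1)) differentiable (at 0)"
    and dBA: "\<And>y. y \<in> S \<Longrightarrow> (\<lambda>t. pd b f (y + t *\<^sub>R axis a 1)) differentiable (at 0)"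
    and "continuous_on S (pd b (pd a f))"
    and "continuous_on S (pd a (pd b f))"
  shows "pd b (pd a f) \<xi> = pd a (pd b f) \<xi>"
proof (rule ccontr)
  assume "pd b (pd a f) \<xi> \<noteq> pd a (pd b f) \<xi>"
  define e where "e = \<bar>pd b (pd a f) \<xi> - pd a (pd b f) \<xi>\<bar> / 3"
  then have "e > 0" using \<open>pd b (pd a f) \<xi> \<noteq> pd a (pd b f) \<xi>\<close> by simp
  have "\<forall>\<^sub>F y in nhds \<xi>. (y \<in> S \<and> \<bar>pd b (pd a f) y - pd b (pd a f) \<xi>\<bar> < e)
      \<and> (y \<in> S \<and> \<bar>pd a (pd b f) y - pd a (pd b f) \<xi>\<bar> < e)"
    using \<open>e > 0\<close> by (intro eventually_conj eventually_nhds_close_if_continuous_on assms)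
  then obtain r where "r > 0" and r: "\<And>y. dist y \<xi> < r \<Longrightarrow> y \<in> S \<and>
      \<bar>pd b (pd a f) y - pd b (pd a f) \<xi>\<bar> < e \<and> \<bar>pd a (pd b f) y - pd a (pd b f) \<xi>\<bar> < e"
    unfolding eventually_nhds_metric by blast
  define h where "h = r / 3"
  have "0 < h" and cball: "cball \<xi> (2 * h) \<subseteq> S"
    using \<open>r > 0\<close> r by (auto simp: h_def dist_commute)
  obtain y where y: "y \<in> cball \<xi> (2 * h)" and y_eq: "f (\<xi> + h *\<^sub>R axis a 1 + h *\<^sub>R axis b 1)
      - f (\<xi> + h *\<^sub>R axis a 1) - f (\<xi> + h *\<^sub>R axis b 1) + f \<xi> = h * h * pd b (pd a f) y"
    using second_difference_mixed_pd[OF cball \<open>0 < h\<close> dA dAB] by blast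
  obtain z where z: "z \<in> cball \<xi> (2 * h)" and z_eq: "f (\<xi> + h *\<^sub>R axis b 1 + h *\<^sub>R axis a 1)
      - f (\<xi> + h *\<^sub>R axis b 1) - f (\<xi> + h *\<^sub>R axis a 1) + f \<xi> = h * h * pd a (pd b f) z"
    using second_difference_mixed_pd[OF cball \<open>0 < h\<close> dB dBA] by blast
  have "f (\<xi> + h *\<^sub>R axis b 1 + h *\<^sub>R axis a 1) = f (\<xi> + h *\<^sub>R axis a 1 + h *\<^sub>R axis b 1)"
    by (simp add: ac_simps)
  with y_eq z_eq have "h * h * pd b (pd a f) y = h * h * pd a (pd b f) z"
    by linarith
  with \<open>0 < h\<close> have "pd b (pd a f) y = pd a (pd b f) z"
    by simp
  moreover have "dist y \<xi> < r" "dist z \<xi> < r"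
    using y z \<open>0 < h\<close> by (auto simp: h_def dist_commute)
  then have "\<bar>pd b (pd a f) y - pd b (pd a f) \<xi>\<bar> < e" "\<bar>pd a (pd b f) z - pd a (pd b f) \<xi>\<bar> < e"
    using r by blast+
  ultimately show False
    unfolding e_def by (auto simp: abs_if split: if_splits)
qed

lemma smooth_fun_on_pd_commute:
  assumes "smooth_fun_on S f" "open S" "\<xi> \<in> S"
  shows "pd b (pd a f) \<xi> = pd a (pd b f) \<xi>"
proof -
  have "(\<lambda>t. f (y + t *\<^sub>R axis c 1)) differentiable (at 0)"
    and "(\<lambda>t. pd d f (y + t *\<^sub>R axis c 1)) differentiable (at 0)" if "y \<in> S" for y c d
    using smooth_fun_on_differentiable_ipd[OF assms(1) that, of "[]"]
      smooth_fun_on_differentiable_ipd[OF assms(1) that, of "[d]"] by simp_all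
  moreover have "continuous_on S (pd c (pd d f))" for c d
    using smooth_fun_on_continuous_ipd[OF assms(1), of "[c, d]"] by simp
  ultimately show ?thesis
    by (intro pd_commute[OF assms(2,3)])
qed

section \<open>The alternating tensor sigma\<close>

definition kdelta :: "'D \<Rightarrow> 'D \<Rightarrow> real" where
  "kdelta \<alpha> \<beta> = (if \<beta> = \<alpha> then 1 else 0)"

lemma sigma_eq_det: "sigma Q \<mu> = det (\<chi> k i. Q k (\<mu> i))"
proof -
  have "sigma Q \<mu> = det (transpose (\<chi> k i. Q k (\<mu> i)))"
    unfolding sigma_def det_def by (simp add: transpose_def)
  then show ?thesis by simp
qed

lemma sigma_fun_upd_eq_det:
  "sigma (Q(a := w)) \<mu> = det (\<chi> k. if k = a then (\<chi> i. w (\<mu> i)) else (\<chi> i. Q k (\<mu> i)))"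
  unfolding sigma_eq_det by (rule arg_cong[where f = det]) (simp add: vec_eq_iff)

lemma sigma_fun_upd_add:
  "sigma (Q(a := (\<lambda>\<beta>. u \<beta> + w \<beta>))) \<mu> = sigma (Q(a := u)) \<mu> + sigma (Q(a := w)) \<mu>"
proof -
  have "(\<chi> i. u (\<mu> i) + w (\<mu> i)) = (\<chi> i. u (\<mu> i)) + (\<chi> i. w (\<mu> i))"
    by (simp add: vec_eq_iff)
  then show ?thesis
    unfolding sigma_fun_upd_eq_det by (simp only: det_row_add)
qed

lemma sigma_fun_upd_scale: "sigma (Q(a := (\<lambda>\<beta>. c * w \<beta>))) \<mu> = c * sigma (Q(a := w)) \<mu>"
proof -
  have "(\<chi> i. c * w (\<mu> i)) = c *s (\<chi> i. w (\<mu> i))"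
    by (simp add: vec_eq_iff)
  then show ?thesis
    unfolding sigma_fun_upd_eq_det by (simp only: det_row_mul)
qed

lemma sigma_fun_upd_kdelta_expansion:
  "sigma (Q(a := w)) \<mu> = (\<Sum>\<alpha>\<in>UNIV. w \<alpha> * sigma (Q(a := kdelta \<alpha>)) \<mu>)"
proof -
  have "(\<chi> i. w (\<mu> i)) = (\<Sum>\<alpha>\<in>UNIV. w \<alpha> *s (\<chi> i. kdelta \<alpha> (\<mu> i)))"
    by (simp add: vec_eq_iff kdelta_def if_distrib cong: if_cong)
  then show ?thesis
    unfolding sigma_fun_upd_eq_det by (simp only: det_linear_row_sum[OF finite] det_row_mul)
qed

lemma sigma_fun_upd_other_row:
  assumes "a \<noteq> b"
  shows "sigma (Q(a := Q b)) \<mu> = 0"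
  unfolding sigma_fun_upd_eq_det
  by (rule det_identical_rows[OF assms]) (simp add: row_def vec_eq_iff)

lemma prod_permutes_fun_upd:
  fixes P :: "'d::finite \<Rightarrow> 'D \<Rightarrow> real"
  assumes p: "p permutes (UNIV :: 'd set)"
  shows "(\<Prod>i\<in>UNIV. (P(a := w)) (p i) (\<mu> i)) = w (\<mu> (inv p a)) * (\<Prod>i\<in>UNIV-{inv p a}. P (p i) (\<mu> i))"
proof -
  have "(\<Prod>i\<in>UNIV. (P(a := w)) (p i) (\<mu> i))
      = (P(a := w)) (p (inv p a)) (\<mu> (inv p a)) * (\<Prod>i\<in>UNIV-{inv p a}. (P(a := w)) (p i) (\<mu> i))"
    by (rule prod.remove) auto
  also have "(\<Prod>i\<in>UNIV-{inv p a}. (P(a := w)) (p i) (\<mu> i)) = (\<Prod>i\<in>UNIV-{inv p a}. P (p i) (\<mu> i))"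
    by (rule prod.cong) (auto simp: permutes_inverses(2)[OF p, symmetric])
  finally show ?thesis using permutes_inverses[OF p] by simp
qed

lemma DERIV_sigma:
  fixes Q :: "real \<Rightarrow> 'd::finite \<Rightarrow> 'D::finite \<Rightarrow> real"
  assumes "\<And>a \<alpha>. ((\<lambda>t. Q t a \<alpha>) has_real_derivative Q' a \<alpha>) (at s)"
  shows "((\<lambda>t. sigma (Q t) \<mu>) has_real_derivative (\<Sum>a\<in>UNIV. sigma ((Q s)(a := Q' a)) \<mu>)) (at s)"
proof -
  have "((\<lambda>t. sigma (Q t) \<mu>) has_real_derivative
     (\<Sum>p\<in>{p. p permutes (UNIV :: 'd set)}. of_int (sign p) *
        (\<Sum>i\<in>UNIV. Q' (p i) (\<mu> i) * (\<Prod>j\<in>UNIV-{i}. Q s (p j) (\<mu> j))))) (at s)"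
    unfolding sigma_def by (intro DERIV_sum DERIV_cmult has_field_derivative_prod assms)
  moreover have "(\<Sum>i\<in>UNIV. Q' (p i) (\<mu> i) * (\<Prod>j\<in>UNIV-{i}. Q s (p j) (\<mu> j)))
      = (\<Sum>a\<in>UNIV. (\<Prod>i\<in>UNIV. ((Q s)(a := Q' a)) (p i) (\<mu> i)))"
    if p: "p permutes (UNIV :: 'd set)" for p
  proof -
    have "(\<Sum>i\<in>UNIV. Q' (p i) (\<mu> i) * (\<Prod>j\<in>UNIV-{i}. Q s (p j) (\<mu> j)))
        = (\<Sum>i\<in>UNIV. Q' (p i) (\<mu> (inv p (p i))) * (\<Prod>j\<in>UNIV-{inv p (p i)}. Q s (p j) (\<mu> j)))"
      by (simp add: permutes_inverses[OF p])
    also have "\<dots> = (\<Sum>a\<in>UNIV. Q' a (\<mu> (inv p a)) * (\<Prod>i\<in>UNIV-{inv p a}. Q s (p i) (\<mu> i)))"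
      by (rule sum.reindex_bij_betw) (rule permutes_imp_bij[OF p])
    finally show ?thesis
      by (simp only: prod_permutes_fun_upd[OF p])
  qed
  then have "(\<Sum>p\<in>{p. p permutes (UNIV :: 'd set)}. of_int (sign p) *
        (\<Sum>i\<in>UNIV. Q' (p i) (\<mu> i) * (\<Prod>j\<in>UNIV-{i}. Q s (p j) (\<mu> j))))
      = (\<Sum>a\<in>UNIV. sigma ((Q s)(a := Q' a)) \<mu>)"
    unfolding sigma_def by (simp add: sum_distrib_left sum.swap[of _ UNIV])
  ultimately show ?thesis by simp
qed

section \<open>Derivatives of the Lagrangians\<close>

definition dgamma_dX ::
  "(real^'D::finite \<Rightarrow> ('d::finite \<Rightarrow> 'D) \<Rightarrow> ('d \<Rightarrow> 'D) \<Rightarrow> real) \<Rightarrow> 'D \<Rightarrow> real^'D \<Rightarrow> ('d \<Rightarrow> 'D \<Rightarrow> real) \<Rightarrow> real"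
  where "dgamma_dX V \<alpha> x P = (\<Sum>\<mu>\<in>UNIV. \<Sum>\<nu>\<in>UNIV. pd \<alpha> (\<lambda>y. V y \<mu> \<nu>) x * sigma P \<mu> * sigma P \<nu>)"

definition dgamma_dP ::
  "(real^'D::finite \<Rightarrow> ('d::finite \<Rightarrow> 'D) \<Rightarrow> ('d \<Rightarrow> 'D) \<Rightarrow> real) \<Rightarrow> 'd \<Rightarrow> 'D \<Rightarrow> real^'D \<Rightarrow> ('d \<Rightarrow> 'D \<Rightarrow> real) \<Rightarrow> real"
  where "dgamma_dP V a \<alpha> x P = (\<Sum>\<mu>\<in>UNIV. \<Sum>\<nu>\<in>UNIV.
     V x \<mu> \<nu> * (sigma (P(a := kdelta \<alpha>)) \<mu> * sigma P \<nu> + sigma P \<mu> * sigma (P(a := kdelta \<alpha>)) \<nu>))"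

lemma DERIV_gammaL_X:
  assumes "\<And>\<mu> \<nu>. smooth_fun_on M (\<lambda>y. V y \<mu> \<nu>)" and "x \<in> M"
  shows "((\<lambda>t. gammaL V (x + t *\<^sub>R axis \<alpha> 1) P) has_real_derivative dgamma_dX V \<alpha> x P) (at 0)"
proof -
  have "((\<lambda>t. V (x + t *\<^sub>R axis \<alpha> 1) \<mu> \<nu>) has_real_derivative pd \<alpha> (\<lambda>y. V y \<mu> \<nu>) x) (at 0)" for \<mu> \<nu>
    using smooth_fun_on_DERIV_ipd[OF assms, of "[]"] by simp
  then show ?thesis
    unfolding gammaL_def dgamma_dX_def by (intro DERIV_sum DERIV_cmult_right)
qed

lemma gammaL_fun_upd_entry:
  "gammaL V x (P(a := (P a)(\<alpha> := P a \<alpha> + t))) =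
    (\<Sum>\<mu>\<in>UNIV. \<Sum>\<nu>\<in>UNIV. V x \<mu> \<nu> * (sigma P \<mu> + t * sigma (P(a := kdelta \<alpha>)) \<mu>)
       * (sigma P \<nu> + t * sigma (P(a := kdelta \<alpha>)) \<nu>))"
proof -
  have "P(a := (P a)(\<alpha> := P a \<alpha> + t)) = P(a := (\<lambda>\<beta>. P a \<beta> + t * kdelta \<alpha> \<beta>))"
    by (auto simp: kdelta_def fun_eq_iff)
  moreover have "sigma (P(a := (\<lambda>\<beta>. P a \<beta> + t * kdelta \<alpha> \<beta>))) \<mu> = sigma P \<mu> + t * sigma (P(a := kdelta \<alpha>)) \<mu>"
    for \<mu>
    by (simp add: sigma_fun_upd_add sigma_fun_upd_scale)
  ultimately show ?thesis
    unfolding gammaL_def by (simp add: mult.assoc)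
qed

lemma DERIV_gammaL_P:
  "((\<lambda>t. gammaL V x (P(a := (P a)(\<alpha> := P a \<alpha> + t)))) has_real_derivative dgamma_dP V a \<alpha> x P) (at 0)"
  unfolding gammaL_fun_upd_entry dgamma_dP_def
  by (intro DERIV_sum) (auto intro!: derivative_eq_intros simp: algebra_simps)

lemma dL_dX_schildL:
  assumes "\<And>\<mu> \<nu>. smooth_fun_on M (\<lambda>y. V y \<mu> \<nu>)" and "x \<in> M"
  shows "dL_dX (schildL V) \<alpha> x P = dgamma_dX V \<alpha> x P"
  unfolding dL_dX_def schildL_def using DERIV_gammaL_X[OF assms] by (rule DERIV_imp_deriv)

lemma dL_dP_schildL: "dL_dP (schildL V) a \<alpha> x P = dgamma_dP V a \<alpha> x P"
  unfolding dL_dP_def schildL_def using DERIV_gammaL_P by (rule DERIV_imp_deriv)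

lemma dL_dX_nambuGotoL:
  assumes "\<And>\<mu> \<nu>. smooth_fun_on M (\<lambda>y. V y \<mu> \<nu>)" and "x \<in> M" and "gammaL V x P > 0"
  shows "dL_dX (nambuGotoL V) \<alpha> x P = dgamma_dX V \<alpha> x P / (2 * sqrt (gammaL V x P))"
  unfolding dL_dX_def nambuGotoL_def
proof (rule DERIV_imp_deriv)
  have "((\<lambda>t. sqrt (gammaL V (x + t *\<^sub>R axis \<alpha> 1) P)) has_real_derivative
      inverse (sqrt (gammaL V (x + 0 *\<^sub>R axis \<alpha> 1) P)) / 2 * dgamma_dX V \<alpha> x P) (at 0)"
    by (rule DERIV_chain2[OF DERIV_real_sqrt DERIV_gammaL_X[OF assms(1,2)]]) (use assms(3) in simp)
  then show "((\<lambda>t. sqrt (gammaL V (x + t *\<^sub>R axis \<alpha> 1) P)) has_real_derivative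
      dgamma_dX V \<alpha> x P / (2 * sqrt (gammaL V x P))) (at 0)"
    by (simp add: field_simps)
qed

lemma dL_dP_nambuGotoL:
  assumes "gammaL V x P > 0"
  shows "dL_dP (nambuGotoL V) a \<alpha> x P = dgamma_dP V a \<alpha> x P / (2 * sqrt (gammaL V x P))"
  unfolding dL_dP_def nambuGotoL_def
proof (rule DERIV_imp_deriv)
  have "((\<lambda>t. sqrt (gammaL V x (P(a := (P a)(\<alpha> := P a \<alpha> + t))))) has_real_derivative
      inverse (sqrt (gammaL V x (P(a := (P a)(\<alpha> := P a \<alpha> + 0))))) / 2 * dgamma_dP V a \<alpha> x P) (at 0)"
    by (rule DERIV_chain2[OF DERIV_real_sqrt DERIV_gammaL_P]) (use assms in simp)
  then show "((\<lambda>t. sqrt (gammaL V x (P(a := (P a)(\<alpha> := P a \<alpha> + t))))) has_real_derivative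
      dgamma_dP V a \<alpha> x P / (2 * sqrt (gammaL V x P))) (at 0)"
    by (simp add: field_simps)
qed

lemma sum_dgamma_dP_mult:
  "(\<Sum>\<alpha>\<in>UNIV. dgamma_dP V a \<alpha> x P * R \<alpha>) =
    (\<Sum>\<mu>\<in>UNIV. \<Sum>\<nu>\<in>UNIV. V x \<mu> \<nu> * (sigma (P(a := R)) \<mu> * sigma P \<nu> + sigma P \<mu> * sigma (P(a := R)) \<nu>))"
  unfolding dgamma_dP_def sum_distrib_right
  by (subst sum.swap, rule sum.cong[OF refl], subst sum.swap, rule sum.cong[OF refl])
    (simp add: sigma_fun_upd_kdelta_expansion[of P a R] sum_distrib_left sum_distrib_right
      sum.distrib algebra_simps)

text \<open>Contracting with \<open>\<partial>\<^sub>bX\<^sup>\<alpha>\<close> replaces row \<open>a\<close> of \<open>P\<close> by row \<open>b\<close>; for \<open>a \<noteq> b\<close> the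
  alternating \<open>sigma\<close> then sees two equal rows.\<close>
lemma dgamma_dP_contract:
  "(\<Sum>\<alpha>\<in>UNIV. dgamma_dP V a \<alpha> x P * P b \<alpha>) = (if a = b then 2 * gammaL V x P else 0)"
  unfolding sum_dgamma_dP_mult
  by (auto simp: sigma_fun_upd_other_row gammaL_def sum_distrib_left algebra_simps)

lemma DERIV_gammaL_comp:
  fixes x :: "real \<Rightarrow> real^'D::finite" and P :: "real \<Rightarrow> 'd::finite \<Rightarrow> 'D \<Rightarrow> real"
  assumes V: "\<And>\<mu> \<nu>. ((\<lambda>t. V (x t) \<mu> \<nu>) has_real_derivative
      (\<Sum>\<alpha>\<in>UNIV. pd \<alpha> (\<lambda>y. V y \<mu> \<nu>) (x s) * x' \<alpha>)) (at s)"
    and P: "\<And>a \<alpha>. ((\<lambda>t. P t a \<alpha>) has_real_derivative P' a \<alpha>) (at s)"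
  shows "((\<lambda>t. gammaL V (x t) (P t)) has_real_derivative
     (\<Sum>\<alpha>\<in>UNIV. dgamma_dX V \<alpha> (x s) (P s) * x' \<alpha>)
       + (\<Sum>a\<in>UNIV. \<Sum>\<alpha>\<in>UNIV. dgamma_dP V a \<alpha> (x s) (P s) * P' a \<alpha>)) (at s)"
proof -
  let ?\<sigma> = "\<lambda>\<mu>. sigma (P s) \<mu>" and ?\<sigma>' = "\<lambda>\<mu>. \<Sum>a\<in>UNIV. sigma ((P s)(a := P' a)) \<mu>"
  have "((\<lambda>t. gammaL V (x t) (P t)) has_real_derivative
     (\<Sum>\<mu>\<in>UNIV. \<Sum>\<nu>\<in>UNIV. (\<Sum>\<alpha>\<in>UNIV. pd \<alpha> (\<lambda>y. V y \<mu> \<nu>) (x s) * x' \<alpha>) * ?\<sigma> \<mu> * ?\<sigma> \<nu>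
        + V (x s) \<mu> \<nu> * (?\<sigma>' \<mu> * ?\<sigma> \<nu> + ?\<sigma> \<mu> * ?\<sigma>' \<nu>))) (at s)"
    unfolding gammaL_def
    by (intro DERIV_sum, rule DERIV_cong[OF DERIV_mult'[OF DERIV_mult'[OF V DERIV_sigma[OF P]] DERIV_sigma[OF P]]])
      (simp add: algebra_simps)
  moreover have "(\<Sum>\<alpha>\<in>UNIV. dgamma_dX V \<alpha> (x s) (P s) * x' \<alpha>)
      = (\<Sum>\<mu>\<in>UNIV. \<Sum>\<nu>\<in>UNIV. (\<Sum>\<alpha>\<in>UNIV. pd \<alpha> (\<lambda>y. V y \<mu> \<nu>) (x s) * x' \<alpha>) * ?\<sigma> \<mu> * ?\<sigma> \<nu>)"
    unfolding dgamma_dX_def sum_distrib_right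
    by (subst sum.swap, rule sum.cong[OF refl], subst sum.swap) (simp add: mult_ac)
  moreover have "(\<Sum>a\<in>UNIV. \<Sum>\<alpha>\<in>UNIV. dgamma_dP V a \<alpha> (x s) (P s) * P' a \<alpha>)
      = (\<Sum>\<mu>\<in>UNIV. \<Sum>\<nu>\<in>UNIV. V (x s) \<mu> \<nu> * (?\<sigma>' \<mu> * ?\<sigma> \<nu> + ?\<sigma> \<mu> * ?\<sigma>' \<nu>))"
    unfolding sum_dgamma_dP_mult
    by (subst sum.swap, rule sum.cong[OF refl], subst sum.swap, rule sum.cong[OF refl])
      (simp add: sum_distrib_left sum_distrib_right sum.distrib distrib_left)
  ultimately show ?thesis
    by (simp add: sum.distrib)
qed

definition euler_lagrange_expr ::
  "(real^'D::finite \<Rightarrow> ('d::finite \<Rightarrow> 'D \<Rightarrow> real) \<Rightarrow> real) \<Rightarrow> (real^'d \<Rightarrow> real^'D) \<Rightarrow> 'D \<Rightarrow> real^'d \<Rightarrow> real"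
  where "euler_lagrange_expr L X \<alpha> \<xi> =
    dL_dX L \<alpha> (X \<xi>) (DX X \<xi>) - (\<Sum>a\<in>UNIV. pd a (\<lambda>\<eta>. dL_dP L a \<alpha> (X \<eta>) (DX X \<eta>)) \<xi>)"

lemma euler_lagrange_iff_expr:
  "euler_lagrange S L X \<longleftrightarrow> (\<forall>\<alpha>. \<forall>\<xi>\<in>S. euler_lagrange_expr L X \<alpha> \<xi> = 0)"
  unfolding euler_lagrange_def euler_lagrange_expr_def ..

section \<open>Along a smooth embedding\<close>

locale volume_metric_embedding =
  fixes S :: "(real^'d::finite) set" and M :: "(real^'D::finite) set"
    and V :: "real^'D \<Rightarrow> ('d \<Rightarrow> 'D) \<Rightarrow> ('d \<Rightarrow> 'D) \<Rightarrow> real"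
    and X :: "real^'d \<Rightarrow> real^'D"
  assumes open_S: "open S" and open_M: "open M"
    and smooth_V: "\<And>\<mu> \<nu>. smooth_fun_on M (\<lambda>x. V x \<mu> \<nu>)"
    and smooth_X: "smooth_map_on S X" and X_in_M: "X ` S \<subseteq> M"
begin

lemma smooth_X_component: "smooth_fun_on S (\<lambda>\<xi>. X \<xi> $ \<alpha>)"
  using smooth_X unfolding smooth_map_on_def by blast

lemma DX_eq_ipd: "(\<lambda>\<xi>. DX X \<xi> a \<alpha>) = ipd [a] (\<lambda>\<xi>. X \<xi> $ \<alpha>)"
  by (simp add: fun_eq_iff DX_def)

lemma DERIV_X_along:
  "\<eta> \<in> S \<Longrightarrow> ((\<lambda>t. X (\<eta> + t *\<^sub>R axis b 1) $ \<alpha>) has_real_derivative DX X \<eta> b \<alpha>) (at 0)"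
  using smooth_fun_on_DERIV_ipd[OF smooth_X_component, of \<eta> "[]"] by (simp add: DX_def)

lemma DERIV_DX_along:
  "\<eta> \<in> S \<Longrightarrow> ((\<lambda>t. DX X (\<eta> + t *\<^sub>R axis b 1) a \<alpha>) has_real_derivative pd b (\<lambda>\<xi>. DX X \<xi> a \<alpha>) \<eta>) (at 0)"
  using smooth_fun_on_DERIV_ipd[OF smooth_X_component, of \<eta> "[a]"] by (simp add: DX_eq_ipd DX_def)

lemma pd_DX_commute: "\<eta> \<in> S \<Longrightarrow> pd b (\<lambda>\<xi>. DX X \<xi> a \<alpha>) \<eta> = pd a (\<lambda>\<xi>. DX X \<xi> b \<alpha>) \<eta>"
  unfolding DX_eq_ipd by (simp add: smooth_fun_on_pd_commute[OF smooth_X_component open_S])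

lemma DERIV_V_along:
  assumes "\<eta> \<in> S"
  shows "((\<lambda>t. V (X (\<eta> + t *\<^sub>R axis b 1)) \<mu> \<nu>) has_real_derivative
           (\<Sum>\<alpha>\<in>UNIV. pd \<alpha> (\<lambda>y. V y \<mu> \<nu>) (X \<eta>) * DX X \<eta> b \<alpha>)) (at 0)"
proof -
  have "((\<lambda>y. V y \<mu> \<nu>) has_derivative (\<lambda>h. \<Sum>\<alpha>\<in>UNIV. h$\<alpha> * pd \<alpha> (\<lambda>y. V y \<mu> \<nu>) (X \<eta>)))
      (at ((\<lambda>t. X (\<eta> + t *\<^sub>R axis b 1)) 0))"
    using smooth_fun_on_has_derivative[OF smooth_V open_M] X_in_M assms by auto
  from DERIV_comp_curve[OF this DERIV_X_along[OF assms]] show ?thesis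
    by simp
qed

lemma DERIV_gamma_v_along:
  assumes "\<eta> \<in> S"
  shows "((\<lambda>t. gamma_v V X (\<eta> + t *\<^sub>R axis b 1)) has_real_derivative
     (\<Sum>\<alpha>\<in>UNIV. dgamma_dX V \<alpha> (X \<eta>) (DX X \<eta>) * DX X \<eta> b \<alpha>)
       + (\<Sum>a\<in>UNIV. \<Sum>\<alpha>\<in>UNIV. dgamma_dP V a \<alpha> (X \<eta>) (DX X \<eta>) * pd b (\<lambda>\<xi>. DX X \<xi> a \<alpha>) \<eta>)) (at 0)"
  unfolding gamma_v_def
  using DERIV_gammaL_comp[OF _ DERIV_DX_along[OF assms], of V "\<lambda>t. X (\<eta> + t *\<^sub>R axis b 1)"]
    DERIV_V_along[OF assms]
  by simp

lemma gamma_v_differentiable_along: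
  "\<eta> \<in> S \<Longrightarrow> (\<lambda>t. gamma_v V X (\<eta> + t *\<^sub>R axis b 1)) differentiable (at 0)"
  using DERIV_gamma_v_along real_differentiable_def by blast

lemma dgamma_dP_differentiable_along:
  assumes "\<eta> \<in> S"
  shows "(\<lambda>t. dgamma_dP V a \<alpha> (X (\<eta> + t *\<^sub>R axis b 1)) (DX X (\<eta> + t *\<^sub>R axis b 1))) differentiable (at 0)"
proof -
  have "(\<lambda>t. V (X (\<eta> + t *\<^sub>R axis b 1)) \<mu> \<nu>) differentiable (at 0)" for \<mu> \<nu>
    using DERIV_V_along[OF assms] real_differentiable_def by blast
  moreover have "(\<lambda>t. sigma (DX X (\<eta> + t *\<^sub>R axis b 1)) \<mu>) differentiable (at 0)" for \<mu>
    using DERIV_sigma[where Q = "\<lambda>t. DX X (\<eta> + t *\<^sub>R axis b 1)", OF DERIV_DX_along[OF assms]]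
      real_differentiable_def by blast
  moreover have "(\<lambda>t. sigma ((DX X (\<eta> + t *\<^sub>R axis b 1))(a := w)) \<mu>) differentiable (at 0)" for w \<mu>
  proof -
    have "((\<lambda>t. ((DX X (\<eta> + t *\<^sub>R axis b 1))(a := w)) i \<beta>) has_real_derivative
        (if i = a then 0 else pd b (\<lambda>\<xi>. DX X \<xi> i \<beta>) \<eta>)) (at 0)" for i \<beta>
      by (cases "i = a") (auto intro: DERIV_DX_along[OF assms])
    from DERIV_sigma[where Q = "\<lambda>t. (DX X (\<eta> + t *\<^sub>R axis b 1))(a := w)", OF this]
    show ?thesis
      using real_differentiable_def by blast
  qed
  ultimately show ?thesis
    unfolding dgamma_dP_def
    by (intro differentiable_sum finite_UNIV ballI differentiable_mult differentiable_add) auto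
qed

lemma euler_lagrange_expr_schildL:
  "\<xi> \<in> S \<Longrightarrow> euler_lagrange_expr (schildL V) X \<alpha> \<xi> =
    dgamma_dX V \<alpha> (X \<xi>) (DX X \<xi>) - (\<Sum>a\<in>UNIV. pd a (\<lambda>\<eta>. dgamma_dP V a \<alpha> (X \<eta>) (DX X \<eta>)) \<xi>)"
  using X_in_M dL_dX_schildL[where M = M and V = V, OF smooth_V]
  by (auto simp: euler_lagrange_expr_def dL_dP_schildL)

lemma euler_lagrange_expr_nambuGotoL:
  assumes const: "\<forall>\<eta>\<in>S. gamma_v V X \<eta> = c" and "c > 0" and "\<xi> \<in> S"
  shows "euler_lagrange_expr (nambuGotoL V) X \<alpha> \<xi> = euler_lagrange_expr (schildL V) X \<alpha> \<xi> / (2 * sqrt c)"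
proof -
  obtain r where "r > 0" "ball \<xi> r \<subseteq> S"
    using open_S \<open>\<xi> \<in> S\<close> open_contains_ball by blast
  have "dL_dX (nambuGotoL V) \<alpha> (X \<xi>) (DX X \<xi>) = dgamma_dX V \<alpha> (X \<xi>) (DX X \<xi>) / (2 * sqrt c)"
    using dL_dX_nambuGotoL[where M = M and V = V, OF smooth_V] X_in_M assms by (auto simp: gamma_v_def)
  moreover have "pd a (\<lambda>\<eta>. dL_dP (nambuGotoL V) a \<alpha> (X \<eta>) (DX X \<eta>)) \<xi>
      = pd a (\<lambda>\<eta>. dgamma_dP V a \<alpha> (X \<eta>) (DX X \<eta>)) \<xi> / (2 * sqrt c)" for a
  proof -
    have "pd a (\<lambda>\<eta>. dL_dP (nambuGotoL V) a \<alpha> (X \<eta>) (DX X \<eta>)) \<xi>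
        = pd a (\<lambda>\<eta>. dgamma_dP V a \<alpha> (X \<eta>) (DX X \<eta>) / (2 * sqrt c)) \<xi>"
      using \<open>r > 0\<close> \<open>ball \<xi> r \<subseteq> S\<close> const \<open>c > 0\<close>
      by (intro pd_cong_ball[of r]) (auto simp: dL_dP_nambuGotoL gamma_v_def)
    also have "\<dots> = pd a (\<lambda>\<eta>. dgamma_dP V a \<alpha> (X \<eta>) (DX X \<eta>)) \<xi> / (2 * sqrt c)"
      by (intro pd_eqI DERIV_cdivide has_real_derivative_pd dgamma_dP_differentiable_along \<open>\<xi> \<in> S\<close>)
    finally show ?thesis .
  qed
  ultimately show ?thesis
    using euler_lagrange_expr_schildL[OF \<open>\<xi> \<in> S\<close>]
    by (simp add: euler_lagrange_expr_def sum_divide_distrib diff_divide_distrib)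
qed

text \<open>Multiplying the Schild equations by \<open>\<partial>\<^sub>bX\<^sup>\<alpha>\<close> and using the symmetry of second derivatives
  turns them into \<open>\<partial>\<^sub>b\<gamma> = \<Sum>\<^sub>a \<partial>\<^sub>a(\<Sum>\<^sub>\<alpha> \<partial>\<gamma>/\<partial>(\<partial>\<^sub>aX\<^sup>\<alpha>) \<partial>\<^sub>bX\<^sup>\<alpha>) = 2 \<partial>\<^sub>b\<gamma>\<close>.\<close>
lemma pd_gamma_v_eq_zero_if_schild:
  assumes schild: "euler_lagrange S (schildL V) X" and "\<xi> \<in> S"
  shows "pd b (gamma_v V X) \<xi> = 0"
proof -
  define q where "q a \<alpha> \<eta> = dgamma_dP V a \<alpha> (X \<eta>) (DX X \<eta>)" for a \<alpha> \<eta>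
  have EL: "dgamma_dX V \<alpha> (X \<xi>) (DX X \<xi>) = (\<Sum>a\<in>UNIV. pd a (q a \<alpha>) \<xi>)" for \<alpha>
    using schild \<open>\<xi> \<in> S\<close> euler_lagrange_expr_schildL[OF \<open>\<xi> \<in> S\<close>]
    unfolding euler_lagrange_iff_expr q_def by auto
  have DX_differentiable: "(\<lambda>t. DX X (\<xi> + t *\<^sub>R axis a 1) b \<alpha>) differentiable (at 0)" for a \<alpha>
    using DERIV_DX_along[OF \<open>\<xi> \<in> S\<close>] real_differentiable_def by blast
  have "pd b (gamma_v V X) \<xi> = (\<Sum>\<alpha>\<in>UNIV. dgamma_dX V \<alpha> (X \<xi>) (DX X \<xi>) * DX X \<xi> b \<alpha>)
      + (\<Sum>a\<in>UNIV. \<Sum>\<alpha>\<in>UNIV. q a \<alpha> \<xi> * pd b (\<lambda>\<eta>. DX X \<eta> a \<alpha>) \<xi>)"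
    unfolding q_def by (rule pd_eqI[OF DERIV_gamma_v_along[OF \<open>\<xi> \<in> S\<close>]])
  also have "\<dots> = (\<Sum>\<alpha>\<in>UNIV. \<Sum>a\<in>UNIV. pd a (q a \<alpha>) \<xi> * DX X \<xi> b \<alpha>)
      + (\<Sum>a\<in>UNIV. \<Sum>\<alpha>\<in>UNIV. q a \<alpha> \<xi> * pd a (\<lambda>\<eta>. DX X \<eta> b \<alpha>) \<xi>)"
    by (simp add: EL pd_DX_commute[OF \<open>\<xi> \<in> S\<close>] sum_distrib_right)
  also have "\<dots> = (\<Sum>a\<in>UNIV. \<Sum>\<alpha>\<in>UNIV. pd a (q a \<alpha>) \<xi> * DX X \<xi> b \<alpha> + q a \<alpha> \<xi> * pd a (\<lambda>\<eta>. DX X \<eta> b \<alpha>) \<xi>)"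
    by (subst sum.swap) (simp add: sum.distrib)
  also have "\<dots> = (\<Sum>a\<in>UNIV. pd a (\<lambda>\<eta>. \<Sum>\<alpha>\<in>UNIV. q a \<alpha> \<eta> * DX X \<eta> b \<alpha>) \<xi>)"
    unfolding q_def
    by (simp add: pd_sum_mult dgamma_dP_differentiable_along[OF \<open>\<xi> \<in> S\<close>] DX_differentiable)
  also have "\<dots> = (\<Sum>a\<in>UNIV. pd a (\<lambda>\<eta>. if a = b then 2 * gamma_v V X \<eta> else 0) \<xi>)"
    by (rule sum.cong[OF refl], rule arg_cong[where f = "\<lambda>h. pd _ h \<xi>"])
      (simp add: fun_eq_iff q_def dgamma_dP_contract gamma_v_def)
  also have "\<dots> = 2 * pd b (gamma_v V X) \<xi>"
    by (rule sum_pd_delta[OF gamma_v_differentiable_along[OF \<open>\<xi> \<in> S\<close>]])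
  finally show ?thesis by simp
qed

lemma euler_lagrange_nambuGotoL_iff_schildL:
  assumes const: "\<forall>\<eta>\<in>S. gamma_v V X \<eta> = c" and pos: "\<forall>\<eta>\<in>S. gamma_v V X \<eta> > 0"
  shows "euler_lagrange S (nambuGotoL V) X \<longleftrightarrow> euler_lagrange S (schildL V) X"
proof -
  have "euler_lagrange_expr (nambuGotoL V) X \<alpha> \<xi> = 0 \<longleftrightarrow> euler_lagrange_expr (schildL V) X \<alpha> \<xi> = 0"
    if "\<xi> \<in> S" for \<alpha> \<xi>
  proof -
    from const pos that have "c > 0" by auto
    then show ?thesis
      using euler_lagrange_expr_nambuGotoL[OF const _ that] by simp
  qed
  then show ?thesis
    unfolding euler_lagrange_iff_expr by blast
qed

end

theorem mainTheorem5:
  fixes S :: "(real^'d::finite) set" and M :: "(real^'D::finite) set"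
    and V :: "real^'D \<Rightarrow> ('d \<Rightarrow> 'D) \<Rightarrow> ('d \<Rightarrow> 'D) \<Rightarrow> real"
    and X :: "real^'d \<Rightarrow> real^'D"
  assumes "open S" and "connected S" and "open M"
    and "volume_metric M V"
    and "smooth_map_on S X" and "X ` S \<subseteq> M"
    and "\<forall>\<xi>\<in>S. gamma_v V X \<xi> > 0"
  shows "euler_lagrange S (schildL V) X \<longleftrightarrow>
           (\<exists>c. \<forall>\<xi>\<in>S. gamma_v V X \<xi> = c) \<and> euler_lagrange S (nambuGotoL V) X"
proof -
  interpret volume_metric_embedding S M V X
    using assms(1,3-6) by unfold_locales (auto simp: volume_metric_def)
  have "gamma_v V X constant_on S" if "euler_lagrange S (schildL V) X"
    using assms(1,2) gamma_v_differentiable_along pd_gamma_v_eq_zero_if_schild[OF that]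
    by (rule constant_on_if_pd_zero)
  then show ?thesis
    using euler_lagrange_nambuGotoL_iff_schildL assms(7) unfolding constant_on_def by blast
qed

end
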